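(* Let $\mathcal{H}$ be a complex Hilbert space and let $A\in\mathcal{B}(\mathcal{H})$ be invertible. For a unit vector $x$ put \[ \xi(x)=\frac{\left|\langle A^2x,x\rangle-\langle Ax,x\rangle^2\right|}{\|A^*x\|}. \] Then \[ \inf_{\|x\|=1}\xi^2(x)+\omega^2(A)\le \|A\|^2 . \]
   Context: $\mathcal{B}(\mathcal{H})$ denotes the algebra of bounded linear operators on $\mathcal{H}$; $\omega(A)=\sup_{\|x\|=1}|\langle Ax,x\rangle|$ is the numerical radius and $\|\cdot\|$ the operator norm. *)

theory Defs
  imports "HOL-Analysis.Analysis"
begin

text \<open>We model a complex
  Hilbert space as a real Banach space (type class real_normed_vector + complete_space)
  equipped with a complex structure J (multiplication by the imaginary unit) and a
  complex inner product ip inducing the norm.\<close>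

definition scaleJ :: "('a::real_vector \<Rightarrow> 'a) \<Rightarrow> complex \<Rightarrow> 'a \<Rightarrow> 'a" where
  "scaleJ J c x = Re c *\<^sub>R x + Im c *\<^sub>R J x"

definition complex_structure :: "('a::real_normed_vector \<Rightarrow> 'a) \<Rightarrow> bool" where
  "complex_structure J \<longleftrightarrow> linear J \<and> (\<forall>x. J (J x) = - x)"

definition complex_inner_on :: "('a::real_normed_vector \<Rightarrow> 'a) \<Rightarrow> ('a \<Rightarrow> 'a \<Rightarrow> complex) \<Rightarrow> bool" where
  "complex_inner_on J ip \<longleftrightarrow>
     (\<forall>x y. ip x y = cnj (ip y x)) \<and>
     (\<forall>x y z. ip (x + y) z = ip x z + ip y z) \<and>
     (\<forall>c x y. ip (scaleJ J c x) y = c * ip x y) \<and>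
     (\<forall>x. 0 \<le> Re (ip x x) \<and> norm x = sqrt (Re (ip x x)))"

definition bounded_clinear_J :: "('a::real_normed_vector \<Rightarrow> 'a) \<Rightarrow> ('a \<Rightarrow> 'a) \<Rightarrow> bool" where
  "bounded_clinear_J J A \<longleftrightarrow> bounded_linear A \<and> (\<forall>x. A (J x) = J (A x))"

definition is_adjoint :: "('a \<Rightarrow> 'a \<Rightarrow> complex) \<Rightarrow> ('a \<Rightarrow> 'a) \<Rightarrow> ('a \<Rightarrow> 'a) \<Rightarrow> bool" where
  "is_adjoint ip A B \<longleftrightarrow> (\<forall>x y. ip (A x) y = ip x (B y))"

definition invertible_bop :: "('a::real_normed_vector \<Rightarrow> 'a) \<Rightarrow> ('a \<Rightarrow> 'a) \<Rightarrow> bool" where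
  "invertible_bop J A \<longleftrightarrow> bounded_clinear_J J A \<and>
     (\<exists>B. bounded_clinear_J J B \<and> A \<circ> B = id \<and> B \<circ> A = id)"

definition numrad :: "('a::real_normed_vector \<Rightarrow> 'a \<Rightarrow> complex) \<Rightarrow> ('a \<Rightarrow> 'a) \<Rightarrow> real" where
  "numrad ip A = (SUP x\<in>{x. norm x = 1}. cmod (ip (A x) x))"

definition xi :: "('a::real_normed_vector \<Rightarrow> 'a \<Rightarrow> complex) \<Rightarrow> ('a \<Rightarrow> 'a) \<Rightarrow> ('a \<Rightarrow> 'a) \<Rightarrow> 'a \<Rightarrow> real" where
  "xi ip A Astar x = cmod (ip (A (A x)) x - (ip (A x) x)\<^sup>2) / norm (Astar x)"

end

theory Submission
  imports Defs
begin

text \<open>For a unit vector x put \<lambda> = <Ax,x> and z = Ax - \<lambda>x. Then z \<bottom> x, so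
  ||z||^2 = ||Ax||^2 - |\<lambda>|^2, and <A^2 x,x> - \<lambda>^2 = <z,A* x>. Cauchy-Schwarz gives
  \<xi>(x) \<le> ||z||, hence \<xi>(x)^2 + |<Ax,x>|^2 \<le> ||Ax||^2 \<le> ||A||^2 for every unit x;
  taking the infimum of the first and the supremum of the second term gives the claim.\<close>

context
  fixes J :: "'a::real_normed_vector \<Rightarrow> 'a" and ip :: "'a \<Rightarrow> 'a \<Rightarrow> complex"
  assumes cinner: "complex_inner_on J ip"
begin

lemma cinner_commute: "ip x y = cnj (ip y x)"
  using cinner unfolding complex_inner_on_def by blast

lemma cinner_add_left: "ip (x + y) z = ip x z + ip y z"
  using cinner unfolding complex_inner_on_def by blast

lemma cinner_scaleJ_left: "ip (scaleJ J c x) y = c * ip x y"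
  using cinner unfolding complex_inner_on_def by blast

lemma cinner_scaleJ_right: "ip x (scaleJ J c y) = cnj c * ip x y"
  by (subst (1 2) cinner_commute) (simp add: cinner_scaleJ_left)

lemma cinner_minus_left: "ip (- x) y = - ip x y"
  using cinner_scaleJ_left[of "-1" x y] by (simp add: scaleJ_def)

lemma cinner_diff_left: "ip (x - y) z = ip x z - ip y z"
  using cinner_add_left[of x "- y" z] by (simp add: cinner_minus_left)

lemma cinner_diff_right: "ip x (y - z) = ip x y - ip x z"
  by (subst (1 2 3) cinner_commute) (simp add: cinner_diff_left)

lemma cinner_self: "ip x x = complex_of_real ((norm x)\<^sup>2)"
proof -
  have "Im (ip x x) = 0"
    using cinner_commute[of x x] by (metis cnj.sel(2) neg_equal_zero)
  moreover have "norm x = sqrt (Re (ip x x))" "0 \<le> Re (ip x x)"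
    using cinner unfolding complex_inner_on_def by blast+
  then have "Re (ip x x) = (norm x)\<^sup>2" by simp
  ultimately show ?thesis by (simp add: complex_eq_iff)
qed

lemma cinner_zero_right: "ip x 0 = 0"
  using cinner_diff_right[of x 0 0] by simp

lemma norm_diff_projection:
  assumes "v \<noteq> 0"
  shows "(norm (u - scaleJ J (ip u v / ip v v) v))\<^sup>2 = (norm u)\<^sup>2 - (cmod (ip u v))\<^sup>2 / (norm v)\<^sup>2"
proof -
  define t where "t = ip u v / ip v v"
  define w where "w = u - scaleJ J t v"
  have vv: "ip v v = complex_of_real ((norm v)\<^sup>2)" by (rule cinner_self)
  have "ip w v = 0"
    using assms by (simp add: w_def t_def cinner_diff_left cinner_scaleJ_left vv)
  then have "ip w w = ip w u"
    by (simp add: w_def cinner_diff_right cinner_scaleJ_right)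
  also have "\<dots> = ip u u - ip u v * cnj (ip u v) / ip v v"
    by (simp add: w_def t_def cinner_diff_left cinner_scaleJ_left cinner_commute[of v u])
  also have "\<dots> = complex_of_real ((norm u)\<^sup>2 - (cmod (ip u v))\<^sup>2 / (norm v)\<^sup>2)"
    unfolding vv cinner_self[of u] complex_norm_square[symmetric] by simp
  finally have "(norm w)\<^sup>2 = (norm u)\<^sup>2 - (cmod (ip u v))\<^sup>2 / (norm v)\<^sup>2"
    unfolding cinner_self[of w] of_real_eq_iff .
  then show ?thesis by (simp only: w_def t_def)
qed

lemma cinner_Cauchy_Schwarz: "cmod (ip u v) \<le> norm u * norm v"
proof (cases "v = 0")
  case True
  then show ?thesis by (simp add: cinner_zero_right)
next
  case False
  then have "(cmod (ip u v))\<^sup>2 / (norm v)\<^sup>2 \<le> (norm u)\<^sup>2"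
    using norm_diff_projection[of v u] by (metis diff_ge_0_iff_ge zero_le_power2)
  then have "(cmod (ip u v))\<^sup>2 \<le> (norm u * norm v)\<^sup>2"
    using False by (simp add: divide_le_eq power_mult_distrib)
  then show ?thesis by (rule power2_le_imp_le) simp
qed

lemma xi_square_plus_cinner_square_le:
  assumes adjoint: "is_adjoint ip A Astar" and unit: "norm x = 1"
  shows "(xi ip A Astar x)\<^sup>2 + (cmod (ip (A x) x))\<^sup>2 \<le> (norm (A x))\<^sup>2"
proof -
  define l where "l = ip (A x) x"
  define z where "z = A x - scaleJ J l x"
  have adj: "\<And>a b. ip (A a) b = ip a (Astar b)"
    using adjoint unfolding is_adjoint_def by blast
  have xx: "ip x x = 1" using unit by (simp add: cinner_self)
  have "x \<noteq> 0" using unit by auto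
  from norm_diff_projection[OF this, of "A x"]
  have norm_z: "(norm z)\<^sup>2 = (norm (A x))\<^sup>2 - (cmod l)\<^sup>2"
    by (simp add: z_def l_def xx unit)
  have "ip (A (A x)) x - l\<^sup>2 = ip z (Astar x)"
    by (simp add: z_def l_def cinner_diff_left cinner_scaleJ_left adj power2_eq_square)
  then have "xi ip A Astar x \<le> norm z"
    \<comment> \<open>if A* x = 0 then xi x = 0, as division by zero yields 0\<close>
    using cinner_Cauchy_Schwarz[of z "Astar x"]
    by (cases "Astar x = 0") (simp_all add: xi_def l_def[symmetric] divide_le_eq)
  then have "(xi ip A Astar x)\<^sup>2 \<le> (norm z)\<^sup>2"
    by (rule power_mono) (simp add: xi_def)
  then show ?thesis using norm_z l_def by simp
qed

end

lemma INF_plus_SUP_square_le: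
  fixes f g :: "'b \<Rightarrow> real"
  assumes "x0 \<in> S" and f_nonneg: "\<And>x. x \<in> S \<Longrightarrow> 0 \<le> f x"
    and g_nonneg: "\<And>x. x \<in> S \<Longrightarrow> 0 \<le> g x"
    and bound: "\<And>x. x \<in> S \<Longrightarrow> f x + (g x)\<^sup>2 \<le> c"
  shows "(INF x\<in>S. f x) + (SUP x\<in>S. g x)\<^sup>2 \<le> c"
proof -
  define m where "m = (INF x\<in>S. f x)"
  have "m \<le> f x" if "x \<in> S" for x
    unfolding m_def using f_nonneg that by (intro cINF_lower bdd_belowI2) auto
  then have g_square_le: "(g x)\<^sup>2 \<le> c - m" if "x \<in> S" for x
    using bound[OF that] that by fastforce
  then have g_le: "g x \<le> sqrt (c - m)" if "x \<in> S" for x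
    using that by (simp add: real_le_rsqrt)
  have "g x0 \<le> (SUP x\<in>S. g x)"
    using assms(1) g_le by (intro cSUP_upper bdd_aboveI2)
  then have "0 \<le> (SUP x\<in>S. g x)"
    using g_nonneg[OF assms(1)] by linarith
  moreover have "(SUP x\<in>S. g x) \<le> sqrt (c - m)"
    using assms(1) g_le by (intro cSUP_least) auto
  ultimately have "(SUP x\<in>S. g x)\<^sup>2 \<le> (sqrt (c - m))\<^sup>2"
    by (rule power_mono[rotated])
  also have "\<dots> = c - m"
    using order_trans[OF zero_le_power2 g_square_le[OF assms(1)]] by simp
  finally show ?thesis unfolding m_def by simp
qed

theorem theorem3p5:
  fixes J :: "'a::{real_normed_vector, complete_space} \<Rightarrow> 'a"
    and ip :: "'a \<Rightarrow> 'a \<Rightarrow> complex"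
    and A Astar :: "'a \<Rightarrow> 'a"
  assumes "complex_structure J"
    and "complex_inner_on J ip"
    and "\<exists>x::'a. x \<noteq> 0"
    and "invertible_bop J A"
    and "is_adjoint ip A Astar"
  shows "(INF x\<in>{x. norm x = 1}. (xi ip A Astar x)\<^sup>2) + (numrad ip A)\<^sup>2 \<le> (onorm A)\<^sup>2"
proof -
  have "bounded_linear A"
    using assms(4) unfolding invertible_bop_def bounded_clinear_J_def by blast
  have "(xi ip A Astar x)\<^sup>2 + (cmod (ip (A x) x))\<^sup>2 \<le> (onorm A)\<^sup>2" if "norm x = 1" for x
  proof -
    have "norm (A x) \<le> onorm A"
      using onorm[OF \<open>bounded_linear A\<close>, of x] that by simp
    then have "(norm (A x))\<^sup>2 \<le> (onorm A)\<^sup>2" by (simp add: power_mono)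
    then show ?thesis
      using xi_square_plus_cinner_square_le[OF assms(2,5) that] by linarith
  qed
  moreover obtain x0 :: 'a where "x0 \<noteq> 0" using assms(3) by blast
  then have "sgn x0 \<in> {x. norm x = 1}" by (simp add: norm_sgn)
  ultimately show ?thesis
    unfolding numrad_def by (intro INF_plus_SUP_square_le) auto
qed

end
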